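(* For all integers $\ell\ge 2$, $k\ge 1$, $n\ge 1$: (a) $f_\ell(n,k)\le \frac{n}{k}\,f_{\ell-1}(n,k)$; (b) if $\ell$ is even, then $f_\ell(n,k)\le 1+k\ell\,(f_{\ell-1}(n,k)-1)\le k\ell\, f_{\ell-1}(n,k)$.
   Context: $f_\ell(n,k)$ is the maximum size of a family $\mathcal S$ of subsets of $A_1\cup\dots\cup A_\ell$, where $A_1,\dots,A_\ell$ are pairwise disjoint $n$-element sets, with $|S\cap A_i|=k$ for all $S\in\mathcal S$ and all $i$, such that for distinct $S,T\in\mathcal S$ the number of indices $i$ with $S\cap T\cap A_i=\emptyset$ is odd. (Equivalently, the clique number of the $\ell$-th xor-power of the Kneser graph $KG(n,k)$.) *)

theory Defs
  imports Complex_Main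
begin

text \<open>Ground set: the disjoint union of A_0,...,A_(l-1), where A_i = {i} x {0..<n}.
  For S a subset of it, the trace S \<inter> A_i is identified with {a. (i,a) \<in> S}.\<close>

definition block_trace :: "(nat \<times> nat) set \<Rightarrow> nat \<Rightarrow> nat set" where
  "block_trace S i = {a. (i, a) \<in> S}"

definition xor_family :: "nat \<Rightarrow> nat \<Rightarrow> nat \<Rightarrow> (nat \<times> nat) set set \<Rightarrow> bool" where
  "xor_family l n k F \<longleftrightarrow>
     (\<forall>S\<in>F. S \<subseteq> {..<l} \<times> {..<n} \<and> (\<forall>i<l. card (block_trace S i) = k)) \<and>
     (\<forall>S\<in>F. \<forall>T\<in>F. S \<noteq> T \<longrightarrow>
        odd (card {i. i < l \<and> block_trace S i \<inter> block_trace T i = {}}))"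

text \<open>f_l(n,k): maximum size of such a family (the empty family is always admissible).\<close>
definition f_xor :: "nat \<Rightarrow> nat \<Rightarrow> nat \<Rightarrow> nat" where
  "f_xor l n k = Max (card ` {F. xor_family l n k F})"

end

theory Submission
  imports Defs
begin

text \<open>Fix a point (i, a) of block i. Members of an admissible family that contain it all meet
  in block i, so deleting block i from them preserves the number of blocks in which two of them
  are disjoint. Since k \<ge> 1 the deletion is also injective on them: equal deletions would meet in
  every block, giving zero, an even number, of disjoint blocks. Hence at most f_(l-1)(n,k) members
  pass through any point. Part (a) follows by double counting the incidences between members and
  the n points of one block, each member containing k of them. For part (b), when l is even two
  distinct members cannot be disjoint, as they would be disjoint in all l blocks; so every member
  other than a fixed S_0 passes through one of the k l points of S_0, each of which carries at
  most f_(l-1)(n,k) - 1 members besides S_0.\<close>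

definition disjoint_blocks :: "nat \<Rightarrow> (nat \<times> nat) set \<Rightarrow> (nat \<times> nat) set \<Rightarrow> nat set" where
  "disjoint_blocks l S T = {i. i < l \<and> block_trace S i \<inter> block_trace T i = {}}"

definition sets_through :: "'a set set \<Rightarrow> 'a \<Rightarrow> 'a set set" where
  "sets_through F p = {S \<in> F. p \<in> S}"

definition skip :: "nat \<Rightarrow> nat \<Rightarrow> nat" where
  "skip i j = (if j < i then j else Suc j)"

definition delete_block :: "nat \<Rightarrow> nat \<Rightarrow> (nat \<times> nat) set \<Rightarrow> (nat \<times> nat) set" where
  "delete_block l i S = {(j, b). j < l - 1 \<and> (skip i j, b) \<in> S}"

lemma inj_skip: "inj (skip i)"
  by (auto simp: inj_def skip_def split: if_splits)

lemma skip_less: "j < l - 1 \<Longrightarrow> skip i j < l"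
  unfolding skip_def by (simp split: if_split) linarith

lemma skip_image:
  assumes "i < l"
  shows "skip i ` {..<l - 1} = {..<l} - {i}"
proof
  show "skip i ` {..<l - 1} \<subseteq> {..<l} - {i}"
    by (auto simp: skip_def)
next
  show "{..<l} - {i} \<subseteq> skip i ` {..<l - 1}"
  proof
    fix j assume j: "j \<in> {..<l} - {i}"
    show "j \<in> skip i ` {..<l - 1}"
    proof (cases "j < i")
      case True
      then show ?thesis using assms by (intro image_eqI[of _ _ j]) (auto simp: skip_def)
    next
      case False
      then show ?thesis using j by (intro image_eqI[of _ _ "j - 1"]) (auto simp: skip_def)
    qed
  qed
qed

lemma block_trace_delete_block:
  "j < l - 1 \<Longrightarrow> block_trace (delete_block l i S) j = block_trace S (skip i j)"
  by (simp add: block_trace_def delete_block_def)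

lemma delete_block_subset:
  "S \<subseteq> {..<l} \<times> {..<n} \<Longrightarrow> delete_block l i S \<subseteq> {..<l - 1} \<times> {..<n}"
  by (auto simp: delete_block_def)

lemma card_disjoint_blocks_delete_block:
  assumes "i < l" "(i, a) \<in> S" "(i, a) \<in> T"
  shows "card (disjoint_blocks (l - 1) (delete_block l i S) (delete_block l i T))
    = card (disjoint_blocks l S T)"
proof -
  define D where "D = {j. block_trace S j \<inter> block_trace T j = {}}"
  have "i \<notin> D"
    using assms by (auto simp: D_def block_trace_def)
  then have "disjoint_blocks l S T = skip i ` {..<l - 1} \<inter> D"
    using skip_image[OF assms(1)] by (auto simp: disjoint_blocks_def D_def)
  also have "\<dots> = skip i ` ({..<l - 1} \<inter> skip i -` D)"
    by blast
  also have "{..<l - 1} \<inter> skip i -` D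
      = disjoint_blocks (l - 1) (delete_block l i S) (delete_block l i T)"
    by (auto simp: disjoint_blocks_def block_trace_delete_block D_def)
  finally show ?thesis
    using card_image[OF inj_on_subset[OF inj_skip subset_UNIV]] by simp
qed

lemma xor_familyD:
  assumes "xor_family l n k F" "S \<in> F"
  shows "S \<subseteq> {..<l} \<times> {..<n}"
    and "\<And>i. i < l \<Longrightarrow> card (block_trace S i) = k"
    and "\<And>T. T \<in> F \<Longrightarrow> S \<noteq> T \<Longrightarrow> odd (card (disjoint_blocks l S T))"
  using assms by (auto simp: xor_family_def disjoint_blocks_def)

lemma xor_familyI:
  assumes "\<And>S. S \<in> F \<Longrightarrow> S \<subseteq> {..<l} \<times> {..<n}"
    and "\<And>S i. S \<in> F \<Longrightarrow> i < l \<Longrightarrow> card (block_trace S i) = k"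
    and "\<And>S T. S \<in> F \<Longrightarrow> T \<in> F \<Longrightarrow> S \<noteq> T \<Longrightarrow> odd (card (disjoint_blocks l S T))"
  shows "xor_family l n k F"
  using assms by (auto simp: xor_family_def disjoint_blocks_def)

lemma finite_xor_families: "finite {F. xor_family l n k F}"
proof (rule finite_subset)
  show "{F. xor_family l n k F} \<subseteq> Pow (Pow ({..<l} \<times> {..<n}))"
    using xor_familyD(1) by blast
qed simp

lemma finite_xor_family:
  assumes "xor_family l n k F"
  shows "finite F"
proof (rule finite_subset)
  show "F \<subseteq> Pow ({..<l} \<times> {..<n})"
    using xor_familyD(1)[OF assms] by blast
qed simp

lemma card_le_f_xor: "xor_family l n k F \<Longrightarrow> card F \<le> f_xor l n k"
  unfolding f_xor_def using finite_xor_families by (intro Max_ge) auto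

lemma f_xor_attained:
  obtains F where "xor_family l n k F" "card F = f_xor l n k"
proof -
  have "xor_family l n k {}"
    by (simp add: xor_family_def)
  then have "f_xor l n k \<in> card ` {F. xor_family l n k F}"
    unfolding f_xor_def using finite_xor_families by (intro Max_in) auto
  then show ?thesis
    using that by auto
qed

lemma one_le_f_xor:
  assumes "k \<le> n"
  shows "1 \<le> f_xor l n k"
proof -
  have "xor_family l n k {{..<l} \<times> {..<k}}"
    using assms by (intro xor_familyI) (auto simp: block_trace_def)
  then show ?thesis
    using card_le_f_xor by fastforce
qed

lemma card_xor_family_member:
  assumes "xor_family l n k F" "S \<in> F"
  shows "card S = k * l"
proof -
  have S: "S \<subseteq> {..<l} \<times> {..<n}"
    using xor_familyD(1)[OF assms] .
  then have "S = Sigma {..<l} (block_trace S)"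
    by (auto simp: block_trace_def)
  moreover have "finite (block_trace S i)" for i
  proof (rule finite_subset)
    show "block_trace S i \<subseteq> {..<n}"
      using S by (auto simp: block_trace_def)
  qed simp
  ultimately have "card S = (\<Sum>i<l. card (block_trace S i))"
    by (metis card_SigmaI finite_lessThan)
  also have "\<dots> = k * l"
    using xor_familyD(2)[OF assms] by simp
  finally show ?thesis .
qed

lemma xor_family_delete_block_sets_through:
  assumes F: "xor_family l n k F" and "i < l"
  shows "xor_family (l - 1) n k (delete_block l i ` sets_through F (i, a))"
proof (rule xor_familyI)
  fix R assume "R \<in> delete_block l i ` sets_through F (i, a)"
  then obtain S where S: "S \<in> F" "R = delete_block l i S"
    by (auto simp: sets_through_def)
  then show "R \<subseteq> {..<l - 1} \<times> {..<n}"
    using delete_block_subset xor_familyD(1)[OF F] by blast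
  fix j assume "j < l - 1"
  then show "card (block_trace R j) = k"
    using S xor_familyD(2)[OF F] by (simp add: block_trace_delete_block skip_less)
next
  fix R R' assume "R \<in> delete_block l i ` sets_through F (i, a)"
    and "R' \<in> delete_block l i ` sets_through F (i, a)" and "R \<noteq> R'"
  then obtain S T where "S \<in> F" "T \<in> F" "S \<noteq> T" "(i, a) \<in> S" "(i, a) \<in> T"
    and "R = delete_block l i S" "R' = delete_block l i T"
    by (auto simp: sets_through_def)
  then show "odd (card (disjoint_blocks (l - 1) R R'))"
    using xor_familyD(3)[OF F] card_disjoint_blocks_delete_block[OF \<open>i < l\<close>] by simp
qed

lemma inj_on_delete_block_sets_through:
  assumes F: "xor_family l n k F" and "i < l" "k \<ge> 1"
  shows "inj_on (delete_block l i) (sets_through F (i, a))"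
proof (rule inj_onI, rule ccontr)
  fix S T assume "S \<in> sets_through F (i, a)" "T \<in> sets_through F (i, a)"
    and eq: "delete_block l i S = delete_block l i T" and "S \<noteq> T"
  then have S: "S \<in> F" "(i, a) \<in> S" and T: "T \<in> F" "(i, a) \<in> T"
    by (auto simp: sets_through_def)
  have "block_trace (delete_block l i S) j \<noteq> {}" if "j < l - 1" for j
  proof -
    have "card (block_trace S (skip i j)) = k"
      using xor_familyD(2)[OF F S(1) skip_less[OF that]] .
    then show ?thesis
      using that \<open>k \<ge> 1\<close> by (auto simp: block_trace_delete_block)
  qed
  then have "disjoint_blocks (l - 1) (delete_block l i S) (delete_block l i T) = {}"
    by (auto simp: disjoint_blocks_def eq)
  then have "card (disjoint_blocks l S T) = 0"
    using card_disjoint_blocks_delete_block[OF \<open>i < l\<close> S(2) T(2)] by simp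
  then show False
    using xor_familyD(3)[OF F S(1) T(1) \<open>S \<noteq> T\<close>] by simp
qed

lemma card_sets_through_le:
  assumes "xor_family l n k F" "i < l" "k \<ge> 1"
  shows "card (sets_through F (i, a)) \<le> f_xor (l - 1) n k"
proof -
  have "card (sets_through F (i, a)) = card (delete_block l i ` sets_through F (i, a))"
    using inj_on_delete_block_sets_through[OF assms] by (simp add: card_image)
  also have "\<dots> \<le> f_xor (l - 1) n k"
    using xor_family_delete_block_sets_through[OF assms(1,2)] by (rule card_le_f_xor)
  finally show ?thesis .
qed

lemma sum_card_sets_through:
  assumes F: "xor_family l n k F" and "i < l"
  shows "(\<Sum>a<n. card (sets_through F (i, a))) = k * card F"
  unfolding sets_through_def
proof (rule sum_multicount)
  show "finite F"
    using finite_xor_family[OF F] .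
  show "\<forall>S\<in>F. card {a \<in> {..<n}. (i, a) \<in> S} = k"
  proof
    fix S assume "S \<in> F"
    then have "{a \<in> {..<n}. (i, a) \<in> S} = block_trace S i"
      using xor_familyD(1)[OF F] by (auto simp: block_trace_def)
    then show "card {a \<in> {..<n}. (i, a) \<in> S} = k"
      using xor_familyD(2)[OF F \<open>S \<in> F\<close> \<open>i < l\<close>] by simp
  qed
qed simp

lemma xor_family_even_intersecting:
  assumes F: "xor_family l n k F" and "even l" "S \<in> F" "T \<in> F" "S \<noteq> T"
  shows "S \<inter> T \<noteq> {}"
proof
  assume "S \<inter> T = {}"
  then have "disjoint_blocks l S T = {..<l}"
    by (auto simp: disjoint_blocks_def block_trace_def)
  then show False
    using xor_familyD(3)[OF F \<open>S \<in> F\<close> \<open>T \<in> F\<close> \<open>S \<noteq> T\<close>] \<open>even l\<close> by simp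
qed

lemma k_mult_f_xor_le:
  assumes "l \<ge> 1" "k \<ge> 1"
  shows "k * f_xor l n k \<le> n * f_xor (l - 1) n k"
proof -
  obtain F where F: "xor_family l n k F" and card_F: "card F = f_xor l n k"
    using f_xor_attained .
  have "l - 1 < l"
    using assms by simp
  have "k * card F = (\<Sum>a<n. card (sets_through F (l - 1, a)))"
    using sum_card_sets_through[OF F \<open>l - 1 < l\<close>] by simp
  also have "\<dots> \<le> (\<Sum>a<n. f_xor (l - 1) n k)"
    by (intro sum_mono card_sets_through_le[OF F \<open>l - 1 < l\<close> \<open>k \<ge> 1\<close>])
  finally show ?thesis
    using card_F by simp
qed

lemma f_xor_even_le:
  assumes "even l" "k \<ge> 1"
  shows "f_xor l n k \<le> 1 + k * l * (f_xor (l - 1) n k - 1)"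
proof -
  obtain F where F: "xor_family l n k F" and card_F: "card F = f_xor l n k"
    using f_xor_attained .
  show ?thesis
  proof (cases "F = {}")
    case True
    then show ?thesis
      using card_F by simp
  next
    case False
    then obtain S\<^sub>0 where S\<^sub>0: "S\<^sub>0 \<in> F"
      by blast
    have "finite F"
      using finite_xor_family[OF F] .
    have "finite S\<^sub>0"
      using finite_subset[OF xor_familyD(1)[OF F S\<^sub>0]] by simp
    have cover: "F - {S\<^sub>0} \<subseteq> (\<Union>p\<in>S\<^sub>0. sets_through F p - {S\<^sub>0})"
      using xor_family_even_intersecting[OF F \<open>even l\<close> S\<^sub>0] by (auto simp: sets_through_def)
    have through_bound: "card (sets_through F p - {S\<^sub>0}) \<le> f_xor (l - 1) n k - 1"
      if "p \<in> S\<^sub>0" for p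
    proof -
      obtain i a where p: "p = (i, a)" and "i < l"
        using \<open>p \<in> S\<^sub>0\<close> xor_familyD(1)[OF F S\<^sub>0] by auto
      have "S\<^sub>0 \<in> sets_through F p" "finite (sets_through F p)"
        using S\<^sub>0 \<open>p \<in> S\<^sub>0\<close> \<open>finite F\<close> by (auto simp: sets_through_def)
      then show ?thesis
        using card_sets_through_le[OF F \<open>i < l\<close> \<open>k \<ge> 1\<close>, of a] p by simp
    qed
    have "card (F - {S\<^sub>0}) \<le> card (\<Union>p\<in>S\<^sub>0. sets_through F p - {S\<^sub>0})"
    proof (rule card_mono[OF finite_subset[OF _ \<open>finite F\<close>] cover])
      show "(\<Union>p\<in>S\<^sub>0. sets_through F p - {S\<^sub>0}) \<subseteq> F"
        by (auto simp: sets_through_def)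
    qed
    also have "\<dots> \<le> (\<Sum>p\<in>S\<^sub>0. card (sets_through F p - {S\<^sub>0}))"
      using card_UN_le[OF \<open>finite S\<^sub>0\<close>] .
    also have "\<dots> \<le> (\<Sum>p\<in>S\<^sub>0. f_xor (l - 1) n k - 1)"
      by (intro sum_mono through_bound)
    also have "\<dots> = k * l * (f_xor (l - 1) n k - 1)"
      using card_xor_family_member[OF F S\<^sub>0] by simp
    finally show ?thesis
      using card_F card_Suc_Diff1[OF \<open>finite F\<close> S\<^sub>0] by simp
  qed
qed

theorem mainTheorem12:
  fixes l n k :: nat
  assumes "l \<ge> 2" and "k \<ge> 1" and "n \<ge> 1"
  shows "real (f_xor l n k) \<le> real n / real k * real (f_xor (l - 1) n k)
    \<and> (k \<le> n \<and> even l \<longrightarrow>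
        real (f_xor l n k) \<le> 1 + real k * real l * (real (f_xor (l - 1) n k) - 1)
      \<and> 1 + real k * real l * (real (f_xor (l - 1) n k) - 1) \<le> real k * real l * real (f_xor (l - 1) n k))"
proof (intro conjI impI)
  have "k * f_xor l n k \<le> n * f_xor (l - 1) n k"
    using k_mult_f_xor_le assms by simp
  then have "real k * real (f_xor l n k) \<le> real n * real (f_xor (l - 1) n k)"
    by (metis of_nat_le_iff of_nat_mult)
  then show "real (f_xor l n k) \<le> real n / real k * real (f_xor (l - 1) n k)"
    using assms by (simp add: field_simps)
next
  assume "k \<le> n \<and> even l"
  then have bound: "f_xor l n k \<le> 1 + k * l * (f_xor (l - 1) n k - 1)"
    and "1 \<le> f_xor (l - 1) n k"
    using f_xor_even_le one_le_f_xor assms by auto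
  have "real (f_xor l n k) \<le> real (1 + k * l * (f_xor (l - 1) n k - 1))"
    using bound by (simp only: of_nat_le_iff)
  then show "real (f_xor l n k) \<le> 1 + real k * real l * (real (f_xor (l - 1) n k) - 1)"
    using \<open>1 \<le> f_xor (l - 1) n k\<close> by (simp add: of_nat_diff)
next
  have "1 \<le> k * l"
    using assms by simp
  then have "1 \<le> real k * real l"
    by (metis of_nat_1 of_nat_le_iff of_nat_mult)
  then show "1 + real k * real l * (real (f_xor (l - 1) n k) - 1) \<le> real k * real l * real (f_xor (l - 1) n k)"
    by (simp add: algebra_simps)
qed

end
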